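(* Let $-1\le\alpha\le1$ and $t\ge0$. For all $(x,y)\in\mathbb{R}^2$ with $(x,y)\notin\{0\}\times2\pi\mathbb{Z}$, the function $t\mapsto W_{\alpha,t}(x,y)-\frac t2$ is non-increasing on $[0,\infty)$, equals $W_\alpha(x,y)$ at $t=0$, and consequently $$W_\alpha(x,y)\ \ge\ W_{\alpha,t}(x,y)-\frac t2\qquad\text{for all }t\ge0.$$
   Context: For $-1\le\alpha\le1$ and $(x,y)\in\mathbb{R}^2$ with $\cosh x-\cos y>0$, define $$W_\alpha(x,y)=\frac12\left[\frac{\alpha\,x\sinh x}{\cosh x-\cos y}-\log\big(2(\cosh x-\cos y)\big)+(1-\alpha)|x|\right],$$ and for $t\ge0$ and $(x,y)$ with $\cosh(|x|+t)-\cos y>0$, $$W_{\alpha,t}(x,y)=\frac{\alpha|x|\sinh(|x|+t)}{2(\cosh(|x|+t)-\cos y)}-\frac12\log\big(2(\cosh(|x|+t)-\cos y)\big)+\frac t2+\frac{1-\alpha}2|x|.$$ *)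

theory Defs
  imports Complex_Main
begin

text \<open>W_alpha(x,y), meaningful when cosh x - cos y > 0.\<close>
definition W :: "real \<Rightarrow> real \<Rightarrow> real \<Rightarrow> real" where
  "W \<alpha> x y = (1/2) * (\<alpha> * x * sinh x / (cosh x - cos y)
       - ln (2 * (cosh x - cos y)) + (1 - \<alpha>) * \<bar>x\<bar>)"

text \<open>W_{alpha,t}(x,y), meaningful when cosh(|x|+t) - cos y > 0.\<close>
definition Wt :: "real \<Rightarrow> real \<Rightarrow> real \<Rightarrow> real \<Rightarrow> real" where
  "Wt \<alpha> t x y = \<alpha> * \<bar>x\<bar> * sinh (\<bar>x\<bar> + t) / (2 * (cosh (\<bar>x\<bar> + t) - cos y))
       - (1/2) * ln (2 * (cosh (\<bar>x\<bar> + t) - cos y)) + t / 2 + ((1 - \<alpha>) / 2) * \<bar>x\<bar>"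

end

theory Submission
  imports Defs
begin

text \<open>With \<open>a = \<bar>x\<bar>\<close> and \<open>c = cos y\<close>, \<open>W\<^sub>\<alpha>\<^sub>,\<^sub>t(x,y) - t/2\<close> is, up to a constant, the profile
  \<open>g(u) = \<alpha> a sinh u / (2(cosh u - c)) - ln(2(cosh u - c))/2\<close> evaluated at \<open>u = a + t\<close>.
  Since \<open>cosh\<^sup>2 - sinh\<^sup>2 = 1\<close>, its derivative is
  \<open>(\<alpha> a (1 - c cosh u) - sinh u (cosh u - c)) / (2(cosh u - c)\<^sup>2)\<close>, which is non-positive for
  \<open>u \<ge> a\<close> because \<open>\<bar>\<alpha>\<bar> \<le> 1\<close>, \<open>a \<le> u \<le> sinh u\<close> and \<open>\<bar>1 - c cosh u\<bar> \<le> cosh u - c\<close> for \<open>\<bar>c\<bar> \<le> 1\<close>.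
  At \<open>t = 0\<close> the two definitions agree because \<open>x sinh x\<close> and \<open>cosh x\<close> are even.\<close>

definition W_profile :: "real \<Rightarrow> real \<Rightarrow> real \<Rightarrow> real \<Rightarrow> real" where
  "W_profile \<alpha> a c u = \<alpha> * a * sinh u / (2 * (cosh u - c)) - ln (2 * (cosh u - c)) / 2"

lemma Wt_eq_W_profile:
  "Wt \<alpha> t x y = W_profile \<alpha> \<bar>x\<bar> (cos y) (\<bar>x\<bar> + t) + t / 2 + (1 - \<alpha>) / 2 * \<bar>x\<bar>"
  by (simp add: Wt_def W_profile_def)

lemma Wt_zero_eq_W: "Wt \<alpha> 0 x y = W \<alpha> x y"
proof -
  have "\<bar>x\<bar> * sinh \<bar>x\<bar> = x * sinh x"
    by (cases "x \<ge> 0") auto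
  then show ?thesis
    by (simp add: Wt_def W_def mult.assoc field_split_simps)
qed

lemma real_le_sinh: "0 \<le> u \<Longrightarrow> u \<le> sinh (u::real)"
  using real_le_x_sinh by (simp add: sinh_field_def exp_minus)

lemma cos_lt_cosh:
  fixes u y :: real
  assumes "u \<noteq> 0 \<or> cos y \<noteq> 1"
  shows "cos y < cosh u"
  using assms cosh_real_ge_1[of u] cos_le_one[of y] cosh_real_one_iff[of u] by linarith

lemma abs_one_minus_mult_cosh_le:
  fixes c u :: real
  assumes "\<bar>c\<bar> \<le> 1"
  shows "\<bar>1 - c * cosh u\<bar> \<le> cosh u - c"
proof -
  have "(1 + c) * 1 \<le> (1 + c) * cosh u"
    using assms cosh_real_ge_1[of u] by (intro mult_left_mono) auto
  moreover have "0 \<le> (1 - c) * (cosh u + 1)"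
    using assms by simp
  ultimately show ?thesis
    by (auto simp: abs_if algebra_simps)
qed

lemma W_profile_derivative_numerator_nonpos:
  fixes \<alpha> a c u :: real
  assumes "\<bar>\<alpha>\<bar> \<le> 1" "\<bar>c\<bar> \<le> 1" "0 \<le> a" "a \<le> u"
  shows "\<alpha> * a * (1 - c * cosh u) - sinh u * (cosh u - c) \<le> 0"
proof -
  have "\<alpha> * a * (1 - c * cosh u) \<le> \<bar>\<alpha>\<bar> * a * \<bar>1 - c * cosh u\<bar>"
    using assms(3) by (metis abs_ge_self abs_mult abs_of_nonneg)
  also have "\<dots> \<le> 1 * a * \<bar>1 - c * cosh u\<bar>"
    using assms by (intro mult_right_mono) auto
  also have "\<dots> \<le> sinh u * (cosh u - c)"
    using assms real_le_sinh[of u] abs_one_minus_mult_cosh_le[of c u]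
    by (intro mult_mono) auto
  finally show ?thesis
    by simp
qed

lemma has_real_derivative_sinh_div_cosh_minus:
  fixes c u :: real
  assumes "c < cosh u"
  shows "((\<lambda>u. sinh u / (cosh u - c)) has_real_derivative (1 - c * cosh u) / (cosh u - c)\<^sup>2) (at u)"
proof -
  have "sinh u * sinh u = cosh u * cosh u - 1"
    using cosh_square_eq[of u] by (simp add: power2_eq_square)
  then show ?thesis
    using assms by (auto intro!: derivative_eq_intros simp: power2_eq_square algebra_simps)
qed

lemma has_real_derivative_ln_cosh_minus:
  fixes c u :: real
  assumes "c < cosh u"
  shows "((\<lambda>u. ln (2 * (cosh u - c))) has_real_derivative sinh u / (cosh u - c)) (at u)"
  using assms by (auto intro!: derivative_eq_intros simp: field_simps)

lemma W_profile_has_derivative: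
  fixes \<alpha> a c u :: real
  assumes "c < cosh u"
  shows "(W_profile \<alpha> a c has_real_derivative
           (\<alpha> * a * (1 - c * cosh u) - sinh u * (cosh u - c)) / (2 * (cosh u - c)\<^sup>2)) (at u)"
proof -
  have "W_profile \<alpha> a c = (\<lambda>u. \<alpha> * a / 2 * (sinh u / (cosh u - c)) - ln (2 * (cosh u - c)) / 2)"
    by (simp add: W_profile_def fun_eq_iff)
  moreover have "((\<lambda>u. \<alpha> * a / 2 * (sinh u / (cosh u - c)) - ln (2 * (cosh u - c)) / 2)
      has_real_derivative \<alpha> * a / 2 * ((1 - c * cosh u) / (cosh u - c)\<^sup>2) - sinh u / (cosh u - c) / 2) (at u)"
    using assms
    by (intro DERIV_diff DERIV_cmult DERIV_cdivide has_real_derivative_sinh_div_cosh_minus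
        has_real_derivative_ln_cosh_minus)
  moreover have "A / 2 * (N / d\<^sup>2) - S / d / 2 = (A * N - S * d) / (2 * d\<^sup>2)"
    if "d \<noteq> 0" for A N S d :: real
    using that by (simp add: field_simps power2_eq_square)
  moreover have "cosh u - c \<noteq> 0"
    using assms by simp
  ultimately show ?thesis
    by metis
qed

lemma W_profile_antimono:
  fixes \<alpha> a c s t :: real
  assumes "\<bar>\<alpha>\<bar> \<le> 1" "\<bar>c\<bar> \<le> 1" "0 \<le> a" "a \<le> s" "s \<le> t" "c < cosh s"
  shows "W_profile \<alpha> a c t \<le> W_profile \<alpha> a c s"
proof (rule DERIV_nonpos_imp_nonincreasing[OF \<open>s \<le> t\<close>])
  fix u
  assume "s \<le> u" "u \<le> t"
  then have "c < cosh u"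
    using assms cosh_real_nonneg_le_iff[of s u] by force
  then have "(W_profile \<alpha> a c has_real_derivative
      (\<alpha> * a * (1 - c * cosh u) - sinh u * (cosh u - c)) / (2 * (cosh u - c)\<^sup>2)) (at u)"
    by (rule W_profile_has_derivative)
  moreover have "(\<alpha> * a * (1 - c * cosh u) - sinh u * (cosh u - c)) / (2 * (cosh u - c)\<^sup>2) \<le> 0"
    using W_profile_derivative_numerator_nonpos[of \<alpha> c a u] assms \<open>s \<le> u\<close>
    by (intro divide_nonpos_nonneg) auto
  ultimately show "\<exists>D. (W_profile \<alpha> a c has_real_derivative D) (at u) \<and> D \<le> 0"
    by blast
qed

theorem mainTheorem6:
  fixes \<alpha> x y :: real
  assumes "-1 \<le> \<alpha>" and "\<alpha> \<le> 1"
    and "\<not> (x = 0 \<and> (\<exists>k::int. y = 2 * pi * of_int k))"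
  shows "(\<forall>s t. 0 \<le> s \<longrightarrow> s \<le> t \<longrightarrow> Wt \<alpha> t x y - t / 2 \<le> Wt \<alpha> s x y - s / 2)
       \<and> Wt \<alpha> 0 x y = W \<alpha> x y
       \<and> (\<forall>t\<ge>0. W \<alpha> x y \<ge> Wt \<alpha> t x y - t / 2)"
proof -
  have "x \<noteq> 0 \<or> cos y \<noteq> 1"
    using assms(3) cos_one_2pi_int[of y] by (auto simp: mult_ac)
  have antimono: "Wt \<alpha> t x y - t / 2 \<le> Wt \<alpha> s x y - s / 2" if "0 \<le> s" "s \<le> t" for s t
  proof -
    have "cos y < cosh (\<bar>x\<bar> + s)"
      using \<open>x \<noteq> 0 \<or> cos y \<noteq> 1\<close> \<open>0 \<le> s\<close> by (intro cos_lt_cosh) auto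
    then have "W_profile \<alpha> \<bar>x\<bar> (cos y) (\<bar>x\<bar> + t) \<le> W_profile \<alpha> \<bar>x\<bar> (cos y) (\<bar>x\<bar> + s)"
      using assms(1,2) that by (intro W_profile_antimono) auto
    then show ?thesis
      by (simp add: Wt_eq_W_profile)
  qed
  moreover have "W \<alpha> x y \<ge> Wt \<alpha> t x y - t / 2" if "t \<ge> 0" for t
    using antimono[of 0 t] that by (simp add: Wt_zero_eq_W)
  ultimately show ?thesis
    by (simp add: Wt_zero_eq_W)
qed

end
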